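(* Fix $m\ge 2$, a nonempty proper subset $\mathcal{S}\subsetneq[m]=\{1,\dots,m\}$ with complement $\mathcal{S}^c$, and $\sigma_e^2>0$. Consider the linear model $y=\mathbf{z}^\top\mathbf{u}+e$ with fixed (non-random) $\mathbf{u}\in\mathbb{R}^m$, where $\mathbb{E}(\mathbf{z})=0$, $\mathrm{Var}(\mathbf{z})=\Sigma$ is positive definite, and $e$ is independent of $\mathbf{z}$ with mean $0$ and variance $\sigma_e^2$. Define the fixed-effects heritability $$h^2(\mathbf{u};\Sigma)=\frac{\mathbf{u}^\top\Sigma\mathbf{u}}{\mathbf{u}^\top\Sigma\mathbf{u}+\sigma_e^2}.$$ Suppose that the heritability attributable to $\mathcal{S}$ is a quadratic form in $\mathbf{u}$, namely for every positive definite $\Sigma$ there is a symmetric $m\times m$ matrix $\Gamma(\Sigma)$ with $$h^2_{\mathcal{S}}(\mathbf{u};\Sigma)=\frac{\mathbf{u}^\top\Gamma(\Sigma)\mathbf{u}}{\mathbf{u}^\top\Sigma\mathbf{u}+\sigma_e^2}\quad\text{for all }\mathbf{u}\in\mathbb{R}^m$$ (equivalently, after normalizing $\mathrm{Var}(y)=1$, $h^2_{\mathcal S}=\mathbf{u}^\top\Gamma(\Sigma)\mathbf{u}$), and that for every positive definite $\Sigma$: (i) $0\le h^2_{\mathcal{S}}(\mathbf{u};\Sigma)\le h^2(\mathbf{u};\Sigma)$ for all $\mathbf{u}\in\mathbb{R}^m$; (ii) $h^2_{\mathcal{S}}(\mathbf{u};\Sigma)=h^2(\mathbf{u};\Sigma)$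 if and only if $\mathbf{u}_{\mathcal{S}^c}=0$; (iii) $\Gamma(\Sigma)$ does not depend on the block $\Sigma_{\mathcal{S}^c,\mathcal{S}^c}$, i.e. $\Gamma(\Sigma)=\Gamma(\Sigma')$ whenever $\Sigma,\Sigma'$ are positive definite and agree in all entries outside the $\mathcal{S}^c\times\mathcal{S}^c$ block. Then for every positive definite $\Sigma$ and every $\mathbf{u}\in\mathbb{R}^m$, $$h^2_{\mathcal{S}}(\mathbf{u};\Sigma)=\frac{\mathbf{u}^\top\Sigma\mathbf{u}-\mathbf{u}_{\mathcal{S}^c}^\top\Sigma_{\mathcal{S}^c\mid\mathcal{S}}\mathbf{u}_{\mathcal{S}^c}}{\mathbf{u}^\top\Sigma\mathbf{u}+\sigma_e^2},$$ where $\Sigma_{\mathcal{S}^c\mid\mathcal{S}}=\Sigma_{\mathcal{S}^c,\mathcal{S}^c}-\Sigma_{\mathcal{S}^c,\mathcal{S}}\Sigma_{\mathcal{S},\mathcal{S}}^{-1}\Sigma_{\mathcal{S},\mathcal{S}^c}$.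
   Context: For $\mathcal{S}_1,\mathcal{S}_2\subseteq[m]$, $\Sigma_{\mathcal{S}_1,\mathcal{S}_2}$ denotes the submatrix of $\Sigma$ with rows indexed by $\mathcal{S}_1$ and columns indexed by $\mathcal{S}_2$; $\mathbf{u}_{\mathcal{S}}$ denotes the subvector of $\mathbf{u}$ with coordinates in $\mathcal{S}$. *)

theory Defs
  imports "HOL-Analysis.Analysis"
begin

text \<open>Coordinates are indexed by a finite type 'm (so [m] = UNIV :: 'm set, m = CARD('m)).\<close>

definition pos_def_mat :: "real^'m^'m \<Rightarrow> bool" where
  "pos_def_mat A \<longleftrightarrow> transpose A = A \<and> (\<forall>x. x \<noteq> 0 \<longrightarrow> x \<bullet> (A *v x) > 0)"

definition symmetric_mat :: "real^'m^'m \<Rightarrow> bool" where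
  "symmetric_mat A \<longleftrightarrow> transpose A = A"

definition quad_form :: "real^'m^'m \<Rightarrow> real^'m \<Rightarrow> real" where
  "quad_form A u = u \<bullet> (A *v u)"

definition herit :: "real \<Rightarrow> real^'m^'m \<Rightarrow> real^'m \<Rightarrow> real" where
  "herit \<sigma>e2 \<Sigma> u = quad_form \<Sigma> u / (quad_form \<Sigma> u + \<sigma>e2)"

definition herit_S :: "(real^'m^'m \<Rightarrow> real^'m^'m) \<Rightarrow> real \<Rightarrow> real^'m^'m \<Rightarrow> real^'m \<Rightarrow> real" where
  "herit_S \<Gamma> \<sigma>e2 \<Sigma> u = quad_form (\<Gamma> \<Sigma>) u / (quad_form \<Sigma> u + \<sigma>e2)"

definition block_inv :: "real^'m^'m \<Rightarrow> 'm set \<Rightarrow> 'm \<Rightarrow> 'm \<Rightarrow> real" where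
  "block_inv A S = (THE B. (\<forall>i j. (i \<notin> S \<or> j \<notin> S) \<longrightarrow> B i j = 0) \<and>
      (\<forall>i\<in>S. \<forall>j\<in>S. (\<Sum>k\<in>S. A $ i $ k * B k j) = (if i = j then 1 else 0)))"

text \<open>Conditional covariance Sigma_{T|S} = Sigma_{T,T} - Sigma_{T,S} Sigma_{S,S}^{-1} Sigma_{S,T}
  (entries for i, j in T, here T = complement of S).\<close>
definition cond_cov :: "real^'m^'m \<Rightarrow> 'm set \<Rightarrow> 'm \<Rightarrow> 'm \<Rightarrow> real" where
  "cond_cov A S i j = A $ i $ j - (\<Sum>k\<in>S. \<Sum>l\<in>S. A $ i $ k * block_inv A S k l * A $ l $ j)"

definition cond_quad :: "real^'m^'m \<Rightarrow> 'm set \<Rightarrow> real^'m \<Rightarrow> real" where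
  "cond_quad A S u = (\<Sum>i\<in>-S. \<Sum>j\<in>-S. u $ i * cond_cov A S i j * u $ j)"

end

theory Submission
  imports Defs
begin

text \<open>Write \<open>\<Gamma>\<close> for \<open>\<Gamma>(\<Sigma>)\<close> and \<open>u = v + w\<close> with \<open>v\<close> supported on \<open>S\<close>, \<open>w\<close> on \<open>S\<^sup>c\<close>.
  By (i) the matrix \<open>\<Sigma> - \<Gamma>\<close> is positive semidefinite, and by (ii) its quadratic form
  vanishes on \<open>v\<close>, so \<open>v\<close> lies in its kernel; hence
  \<open>u\<^sup>T\<Gamma>u = u\<^sup>T\<Sigma>u - w\<^sup>T\<Sigma>w + w\<^sup>T\<Gamma>w\<close> and everything reduces to showing
  \<open>w\<^sup>T\<Gamma>w = K(w) := (\<Sigma>w)\<^sub>S\<^sup>T \<Sigma>\<^sub>S\<^sub>S\<^sup>-\<^sup>1 (\<Sigma>w)\<^sub>S\<close>, since \<open>w\<^sup>T\<Sigma>w - K(w)\<close> is the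
  conditional quadratic form.
  For \<open>\<ge>\<close>, take \<open>v\<close> minimising \<open>(v + w)\<^sup>T\<Sigma>(v + w)\<close>; the minimum is \<open>w\<^sup>T\<Sigma>w - K(w)\<close>,
  and \<open>(v + w)\<^sup>T\<Gamma>(v + w) \<ge> 0\<close>.
  For \<open>\<le>\<close>, replace the conditional covariance block inside \<open>\<Sigma>\<close> by \<open>\<epsilon>I\<close>: the result is still
  positive definite, has the same \<open>\<Gamma>\<close> by (iii), and its quadratic form at \<open>w\<close> is
  \<open>K(w) + \<epsilon>|w|\<^sup>2\<close>, which by (i) bounds \<open>w\<^sup>T\<Gamma>w\<close>.\<close>

lemma quad_form_eq_sum: "quad_form A x = (\<Sum>i\<in>UNIV. \<Sum>j\<in>UNIV. x$i * A$i$j * x$j)"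
  unfolding quad_form_def inner_vec_def matrix_vector_mult_def
  by (simp add: sum_distrib_left mult.assoc mult.commute mult.left_commute)

lemma symmetric_mat_entry: "symmetric_mat A \<Longrightarrow> A$i$j = A$j$i"
  unfolding symmetric_mat_def by (metis transpose_def vec_lambda_beta)

lemma pos_def_mat_symmetric: "pos_def_mat A \<Longrightarrow> symmetric_mat A"
  unfolding pos_def_mat_def symmetric_mat_def by simp

lemma quad_form_nonneg: "pos_def_mat A \<Longrightarrow> 0 \<le> quad_form A x"
  unfolding pos_def_mat_def quad_form_def by (cases "x = 0") (auto intro: less_imp_le)

lemma quad_form_pos: "pos_def_mat A \<Longrightarrow> x \<noteq> 0 \<Longrightarrow> 0 < quad_form A x"
  unfolding pos_def_mat_def quad_form_def by auto

lemma symmetric_mat_inner_commute: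
  "symmetric_mat (A::real^'n^'n) \<Longrightarrow> x \<bullet> (A *v y) = y \<bullet> (A *v x)"
  unfolding symmetric_mat_def by (metis dot_lmul_matrix transpose_matrix_vector inner_commute)

lemma quad_form_add:
  "symmetric_mat (A::real^'n^'n) \<Longrightarrow>
   quad_form A (x + y) = quad_form A x + 2 * (x \<bullet> (A *v y)) + quad_form A y"
  unfolding quad_form_def using symmetric_mat_inner_commute[of A x y]
  by (simp add: matrix_vector_right_distrib inner_add_left inner_add_right)

lemma quad_form_scaleR: "quad_form A (t *\<^sub>R x) = t * t * quad_form A x"
  unfolding quad_form_def by (simp add: matrix_vector_mult_scaleR)

lemma quad_form_diff_mat: "quad_form (A - B) x = quad_form A x - quad_form B x"
  unfolding quad_form_def by (simp add: matrix_vector_mult_diff_rdistrib inner_diff_right)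

lemma psd_quad_form_eq_0_imp_kernel:
  fixes D :: "real^'n^'n"
  assumes sym: "symmetric_mat D" and psd: "\<And>y. 0 \<le> quad_form D y"
    and zero: "quad_form D x = 0"
  shows "D *v x = 0"
proof (rule ccontr)
  define z where "z = D *v x"
  define c where "c = z \<bullet> z"
  define d where "d = quad_form D z"
  assume "D *v x \<noteq> 0"
  then have c: "0 < c" unfolding c_def z_def by simp
  have d: "0 \<le> d" unfolding d_def by (rule psd)
  \<comment> \<open>Moving from \<open>x\<close> along \<open>D x\<close> by \<open>t\<close> changes the form by \<open>2tc + t\<^sup>2d\<close>, negative for this \<open>t\<close>.\<close>
  define t where "t = - c / (d + 1)"
  have "quad_form D (x + t *\<^sub>R z) = 2 * (t * c) + t * t * d"
    using quad_form_add[OF sym, of x "t *\<^sub>R z"] symmetric_mat_inner_commute[OF sym, of x z] zero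
    by (simp add: quad_form_scaleR matrix_vector_mult_scaleR c_def d_def z_def)
  also have "t * t * d \<le> t * t * (d + 1)" by (intro mult_left_mono) auto
  also have "t * t * (d + 1) = - (t * c)" using d by (simp add: t_def)
  also have "2 * (t * c) + - (t * c) < 0" using c d by (simp add: t_def)
  finally show False using psd[of "x + t *\<^sub>R z"] by linarith
qed

lemma quad_form_add_kernel:
  fixes D :: "real^'n^'n"
  assumes "symmetric_mat D" and "D *v v = 0"
  shows "quad_form D (v + w) = quad_form D w"
  using quad_form_add[OF assms(1), of v w] symmetric_mat_inner_commute[OF assms(1), of v w] assms(2)
  by (simp add: quad_form_def)

definition vec_restrict :: "'n set \<Rightarrow> real^'n \<Rightarrow> real^'n" where
  "vec_restrict T x = (\<chi> i. if i \<in> T then x$i else 0)"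

lemma vec_restrict_nth: "vec_restrict T x $ i = (if i \<in> T then x$i else 0)"
  by (simp add: vec_restrict_def)

lemma vec_restrict_add_compl: "vec_restrict T x + vec_restrict (-T) x = x"
  by (simp add: vec_eq_iff vec_restrict_nth)

lemma inner_eq_sum_support:
  "(\<And>i. i \<notin> T \<Longrightarrow> x$i = 0) \<Longrightarrow> x \<bullet> (y::real^'n) = (\<Sum>i\<in>T. x$i * y$i)"
  unfolding inner_vec_def inner_real_def by (rule sum.mono_neutral_right) auto

lemma inner_disjoint_support: "(\<And>i. x$i = 0 \<or> y$i = 0) \<Longrightarrow> x \<bullet> (y::real^'n) = 0"
  unfolding inner_vec_def by (intro sum.neutral) (metis inner_real_def mult_eq_0_iff)

lemma quad_form_diff_eq_restrict:
  fixes A A' :: "real^'n^'n"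
  assumes "\<And>i j. \<not> (i \<in> T \<and> j \<in> T) \<Longrightarrow> A$i$j = A'$i$j"
  shows "quad_form A x - quad_form A' x
    = quad_form A (vec_restrict T x) - quad_form A' (vec_restrict T x)"
proof -
  have "quad_form A x - quad_form A' x = (\<Sum>i\<in>UNIV. \<Sum>j\<in>UNIV. x$i * (A$i$j - A'$i$j) * x$j)"
    unfolding quad_form_eq_sum by (simp add: sum_subtractf[symmetric] algebra_simps)
  also have "\<dots> = (\<Sum>i\<in>UNIV. \<Sum>j\<in>UNIV.
      vec_restrict T x $ i * (A$i$j - A'$i$j) * vec_restrict T x $ j)"
    using assms by (intro sum.cong refl) (auto simp: vec_restrict_nth)
  also have "\<dots> = quad_form A (vec_restrict T x) - quad_form A' (vec_restrict T x)"
    unfolding quad_form_eq_sum by (simp only: sum_subtractf[symmetric] algebra_simps)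
  finally show ?thesis .
qed

subsection \<open>Invertibility of principal blocks\<close>

definition pad_block :: "real^'n^'n \<Rightarrow> 'n set \<Rightarrow> real^'n^'n" where
  "pad_block A S = (\<chi> i k. if i \<in> S \<and> k \<in> S then A$i$k else if i = k then 1 else 0)"

lemma pad_block_mult_vec:
  "(pad_block A S *v x) $ i = (if i \<in> S then \<Sum>k\<in>S. A$i$k * x$k else x$i)"
proof (cases "i \<in> S")
  case True
  have "(pad_block A S *v x) $ i = (\<Sum>k\<in>UNIV. if k \<in> S then A$i$k * x$k else 0)"
    unfolding matrix_vector_mult_def vec_lambda_beta using True
    by (intro sum.cong) (auto simp: pad_block_def)
  then show ?thesis using True by (simp add: sum.If_cases)
next
  case False
  have "(pad_block A S *v x) $ i = (\<Sum>k\<in>UNIV. if k = i then x$k else 0)"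
    unfolding matrix_vector_mult_def vec_lambda_beta using False
    by (intro sum.cong) (auto simp: pad_block_def)
  then show ?thesis using False by simp
qed

lemma quad_form_pad_block:
  "quad_form (pad_block A S) x = quad_form A (vec_restrict S x) + (\<Sum>i\<in>-S. x$i * x$i)"
proof -
  have "quad_form (pad_block A S) x = (\<Sum>i\<in>UNIV. \<Sum>j\<in>UNIV.
      vec_restrict S x $ i * A$i$j * vec_restrict S x $ j
      + (if i = j \<and> i \<notin> S then x$i * x$j else 0))"
    unfolding quad_form_eq_sum by (intro sum.cong refl) (auto simp: pad_block_def vec_restrict_nth)
  also have "\<dots> = quad_form A (vec_restrict S x)
      + (\<Sum>i\<in>UNIV. \<Sum>j\<in>UNIV. if i = j \<and> i \<notin> S then x$i * x$j else 0)"
    unfolding quad_form_eq_sum by (simp add: sum.distrib)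
  also have "(\<Sum>i\<in>UNIV. \<Sum>j\<in>UNIV. if i = j \<and> i \<notin> S then x$i * x$j else 0)
      = (\<Sum>i\<in>UNIV. if i \<notin> S then x$i * x$i else 0)"
    by (intro sum.cong refl) (auto simp: if_distrib cong: if_cong)
  also have "\<dots> = (\<Sum>i\<in>-S. x$i * x$i)"
    by (simp add: sum.If_cases Collect_neg_eq)
  finally show ?thesis .
qed

lemma pos_def_mat_pad_block:
  assumes pd: "pos_def_mat A"
  shows "pos_def_mat (pad_block A S)"
  unfolding pos_def_mat_def
proof (intro conjI allI impI)
  show "transpose (pad_block A S) = pad_block A S"
    using symmetric_mat_entry[OF pos_def_mat_symmetric[OF pd]]
    by (auto simp: vec_eq_iff transpose_def pad_block_def)
next
  fix x :: "real^'a" assume "x \<noteq> 0"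
  then obtain i where i: "x$i \<noteq> 0" by (auto simp: vec_eq_iff)
  have off: "0 \<le> (\<Sum>i\<in>-S. x$i * x$i)" by (intro sum_nonneg) auto
  show "0 < x \<bullet> (pad_block A S *v x)"
  proof (cases "i \<in> S")
    case True
    then have "vec_restrict S x \<noteq> 0" using i by (auto simp: vec_eq_iff vec_restrict_nth)
    then show ?thesis
      using quad_form_pos[OF pd] off quad_form_pad_block[of A S x] unfolding quad_form_def
      by fastforce
  next
    case False
    then have "0 < (\<Sum>i\<in>-S. x$i * x$i)"
      using i by (intro sum_pos2[of _ i]) (auto simp: zero_less_mult_iff linorder_neq_iff)
    then show ?thesis
      using quad_form_nonneg[OF pd, of "vec_restrict S x"] quad_form_pad_block[of A S x]
      unfolding quad_form_def by linarith
  qed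
qed

lemma pos_def_mat_kernel: "pos_def_mat A \<Longrightarrow> A *v x = 0 \<Longrightarrow> x = 0"
  using quad_form_pos[of A x] by (force simp: quad_form_def)

lemma block_inv_spec:
  fixes A :: "real^'n^'n"
  assumes pd: "pos_def_mat A"
  shows "(\<forall>i j. (i \<notin> S \<or> j \<notin> S) \<longrightarrow> block_inv A S i j = 0) \<and>
    (\<forall>i\<in>S. \<forall>j\<in>S. (\<Sum>k\<in>S. A$i$k * block_inv A S k j) = (if i = j then 1 else 0))"
proof -
  define M where "M = pad_block A S"
  define P where "P = (\<lambda>B::'n \<Rightarrow> 'n \<Rightarrow> real. (\<forall>i j. (i \<notin> S \<or> j \<notin> S) \<longrightarrow> B i j = 0) \<and>
      (\<forall>i\<in>S. \<forall>j\<in>S. (\<Sum>k\<in>S. A$i$k * B k j) = (if i = j then 1 else 0)))"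
  have inj: "x = 0" if "M *v x = 0" for x
    using pos_def_mat_kernel[OF pos_def_mat_pad_block[OF pd]] that by (simp add: M_def)
  then obtain N where "N ** M = mat 1" using matrix_left_invertible_ker by blast
  then have MN: "M ** N = mat 1" using matrix_left_right_inverse by blast
  have "P (\<lambda>k l. if k \<in> S \<and> l \<in> S then N$k$l else 0)"
    unfolding P_def
  proof (intro conjI ballI allI impI)
    fix i j assume i: "i \<in> S" and j: "j \<in> S"
    have "(\<Sum>k\<in>S. A$i$k * (if k \<in> S \<and> j \<in> S then N$k$j else 0))
        = (M *v (\<chi> k. N$k$j)) $ i"
      using i j by (simp add: M_def pad_block_mult_vec)
    also have "\<dots> = (M ** N) $ i $ j"
      by (simp add: matrix_vector_mult_def matrix_matrix_mult_def)
    finally show "(\<Sum>k\<in>S. A$i$k * (if k \<in> S \<and> j \<in> S then N$k$j else 0)) = (if i = j then 1 else 0)"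
      using MN by (simp add: mat_def)
  qed auto
  moreover have "B1 = B2" if p1: "P B1" and p2: "P B2" for B1 B2
  proof (intro ext)
    fix k j
    define e :: "real^'n" where "e = (\<chi> k. B1 k j - B2 k j)"
    have "M *v e = 0"
    proof (subst vec_eq_iff, intro allI)
      fix i
      show "(M *v e)$i = 0$i"
      proof (cases "i \<in> S")
        case True
        have "(M *v e)$i = (\<Sum>k\<in>S. A$i$k * B1 k j) - (\<Sum>k\<in>S. A$i$k * B2 k j)"
          using True by (simp add: M_def pad_block_mult_vec e_def right_diff_distrib sum_subtractf)
        then show ?thesis using p1 p2 True unfolding P_def by (cases "j \<in> S") auto
      qed (use p1 p2 in \<open>simp add: M_def pad_block_mult_vec e_def P_def\<close>)
    qed
    then have "e = 0" by (rule inj)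
    then show "B1 k j = B2 k j" unfolding e_def by (simp add: vec_eq_iff)
  qed
  ultimately have "\<exists>!B. P B" by blast
  then have "P (THE B. P B)" by (rule theI')
  then show ?thesis unfolding P_def block_inv_def by simp
qed

subsection \<open>The part of a quadratic form explained by a block of coordinates\<close>

locale pos_def_partition =
  fixes \<Sigma> :: "real^'m::finite^'m" and S :: "'m set"
  assumes pos_def: "pos_def_mat \<Sigma>"
begin

abbreviation Binv :: "'m \<Rightarrow> 'm \<Rightarrow> real" where
  "Binv \<equiv> block_inv \<Sigma> S"

lemma Sigma_Binv: "i \<in> S \<Longrightarrow> j \<in> S \<Longrightarrow> (\<Sum>k\<in>S. \<Sigma>$i$k * Binv k j) = (if i = j then 1 else 0)"
  using block_inv_spec[OF pos_def, of S] by blast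

lemma Sigma_symmetric: "symmetric_mat \<Sigma>"
  using pos_def_mat_symmetric[OF pos_def] .

lemma Sigma_entry_commute: "\<Sigma>$i$j = \<Sigma>$j$i"
  using symmetric_mat_entry[OF Sigma_symmetric] .

definition proj_cov :: "'m \<Rightarrow> 'm \<Rightarrow> real" where
  "proj_cov i j = (\<Sum>k\<in>S. \<Sum>l\<in>S. \<Sigma>$i$k * Binv k l * \<Sigma>$l$j)"

definition proj_quad :: "real^'m \<Rightarrow> real" where
  "proj_quad w = (\<Sum>k\<in>S. \<Sum>l\<in>S. (\<Sigma> *v w)$k * Binv k l * (\<Sigma> *v w)$l)"

definition opt_shift :: "real^'m \<Rightarrow> real^'m" where
  "opt_shift w = (\<chi> k. if k \<in> S then - (\<Sum>l\<in>S. Binv k l * (\<Sigma> *v w)$l) else 0)"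

lemma opt_shift_outside: "i \<notin> S \<Longrightarrow> opt_shift w $ i = 0"
  by (simp add: opt_shift_def)

lemma proj_quad_eq_sum: "proj_quad w = (\<Sum>i\<in>UNIV. \<Sum>j\<in>UNIV. w$i * proj_cov i j * w$j)"
proof -
  have "(\<Sum>i\<in>UNIV. \<Sum>j\<in>UNIV. w$i * proj_cov i j * w$j) =
     (\<Sum>i\<in>UNIV. \<Sum>j\<in>UNIV. \<Sum>k\<in>S. \<Sum>l\<in>S. (\<Sigma>$k$i * w$i) * Binv k l * (\<Sigma>$l$j * w$j))"
    unfolding proj_cov_def
    by (simp add: sum_distrib_left sum_distrib_right Sigma_entry_commute ac_simps)
  also have "\<dots> = (\<Sum>k\<in>S. \<Sum>l\<in>S. \<Sum>i\<in>UNIV. \<Sum>j\<in>UNIV. (\<Sigma>$k$i * w$i) * Binv k l * (\<Sigma>$l$j * w$j))"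
    by (simp only: sum.swap[of _ UNIV S])
  also have "\<dots> = proj_quad w"
    unfolding proj_quad_def matrix_vector_mult_def vec_lambda_beta
    by (simp add: sum_distrib_left sum_distrib_right ac_simps)
  finally show ?thesis by simp
qed

lemma Sigma_opt_shift: "i \<in> S \<Longrightarrow> (\<Sigma> *v opt_shift w)$i = - (\<Sigma> *v w)$i"
proof -
  assume i: "i \<in> S"
  have "(\<Sigma> *v opt_shift w)$i = (\<Sum>k\<in>S. \<Sigma>$i$k * - (\<Sum>l\<in>S. Binv k l * (\<Sigma> *v w)$l))"
    unfolding matrix_vector_mult_def vec_lambda_beta opt_shift_def
    by (simp add: if_distrib sum.If_cases Int_def)
  also have "\<dots> = - (\<Sum>k\<in>S. \<Sum>l\<in>S. \<Sigma>$i$k * Binv k l * (\<Sigma> *v w)$l)"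
    by (simp add: sum_distrib_left sum_negf mult.assoc)
  also have "\<dots> = - (\<Sum>l\<in>S. (\<Sum>k\<in>S. \<Sigma>$i$k * Binv k l) * (\<Sigma> *v w)$l)"
    by (subst sum.swap) (simp add: sum_distrib_right)
  also have "\<dots> = - (\<Sum>l\<in>S. if l = i then (\<Sigma> *v w)$l else 0)"
    using i by (intro arg_cong[where f=uminus] sum.cong) (auto simp: Sigma_Binv)
  finally show ?thesis using i by simp
qed

lemma quad_form_opt_shift_add: "quad_form \<Sigma> (opt_shift w + w) = quad_form \<Sigma> w - proj_quad w"
proof -
  have cross: "opt_shift w \<bullet> (\<Sigma> *v w) = - proj_quad w"
  proof -
    have "opt_shift w \<bullet> (\<Sigma> *v w) = (\<Sum>k\<in>S. opt_shift w $ k * (\<Sigma> *v w)$k)"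
      by (rule inner_eq_sum_support) (simp add: opt_shift_outside)
    also have "\<dots> = - proj_quad w"
      unfolding proj_quad_def opt_shift_def
      by (simp add: sum_distrib_left sum_distrib_right sum_negf ac_simps)
    finally show ?thesis .
  qed
  have square: "quad_form \<Sigma> (opt_shift w) = proj_quad w"
  proof -
    have "quad_form \<Sigma> (opt_shift w) = (\<Sum>k\<in>S. opt_shift w $ k * (\<Sigma> *v opt_shift w)$k)"
      unfolding quad_form_def by (rule inner_eq_sum_support) (simp add: opt_shift_outside)
    also have "\<dots> = (\<Sum>k\<in>S. - opt_shift w $ k * (\<Sigma> *v w)$k)"
      by (intro sum.cong) (auto simp: Sigma_opt_shift)
    also have "\<dots> = proj_quad w"
      unfolding proj_quad_def opt_shift_def
      by (simp add: sum_distrib_left sum_distrib_right sum_negf ac_simps)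
    finally show ?thesis .
  qed
  show ?thesis using quad_form_add[OF Sigma_symmetric, of "opt_shift w" w] cross square by simp
qed

lemma quad_form_add_ge:
  assumes v: "\<And>i. i \<notin> S \<Longrightarrow> v$i = 0"
  shows "quad_form \<Sigma> w - proj_quad w \<le> quad_form \<Sigma> (v + w)"
proof -
  \<comment> \<open>\<open>opt_shift w + w\<close> is \<open>\<Sigma>\<close>-orthogonal to every vector supported on \<open>S\<close>.\<close>
  have orth: "(v - opt_shift w) \<bullet> (\<Sigma> *v (opt_shift w + w)) = 0"
  proof (rule inner_disjoint_support)
    fix i
    show "(v - opt_shift w)$i = 0 \<or> (\<Sigma> *v (opt_shift w + w))$i = 0"
      by (cases "i \<in> S")
        (simp_all add: v opt_shift_outside matrix_vector_right_distrib Sigma_opt_shift)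
  qed
  have "quad_form \<Sigma> (v + w) = quad_form \<Sigma> ((v - opt_shift w) + (opt_shift w + w))"
    by simp
  also have "\<dots> = quad_form \<Sigma> (v - opt_shift w) + quad_form \<Sigma> (opt_shift w + w)"
    using quad_form_add[OF Sigma_symmetric, of "v - opt_shift w" "opt_shift w + w"] orth by simp
  finally show ?thesis
    using quad_form_opt_shift_add quad_form_nonneg[OF pos_def, of "v - opt_shift w"] by simp
qed

lemma cond_quad_eq:
  "cond_quad \<Sigma> S u = quad_form \<Sigma> (vec_restrict (-S) u) - proj_quad (vec_restrict (-S) u)"
proof -
  define w where "w = vec_restrict (-S) u"
  have "cond_quad \<Sigma> S u = (\<Sum>i\<in>-S. \<Sum>j\<in>-S. w$i * (\<Sigma>$i$j - proj_cov i j) * w$j)"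
    unfolding cond_quad_def cond_cov_def proj_cov_def w_def
    by (intro sum.cong) (auto simp: mult.assoc vec_restrict_nth)
  also have "\<dots> = (\<Sum>i\<in>UNIV. \<Sum>j\<in>UNIV. w$i * (\<Sigma>$i$j - proj_cov i j) * w$j)"
  proof (rule sum.mono_neutral_cong_left)
    fix i assume "i \<in> -S"
    show "(\<Sum>j\<in>-S. w$i * (\<Sigma>$i$j - proj_cov i j) * w$j)
        = (\<Sum>j\<in>UNIV. w$i * (\<Sigma>$i$j - proj_cov i j) * w$j)"
      by (rule sum.mono_neutral_left) (auto simp: w_def vec_restrict_nth)
  qed (auto simp: w_def vec_restrict_nth)
  also have "\<dots> = quad_form \<Sigma> w - proj_quad w"
    unfolding quad_form_eq_sum proj_quad_eq_sum
    by (simp add: sum_subtractf[symmetric] algebra_simps)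
  finally show ?thesis unfolding w_def .
qed

\<comment> \<open>\<open>proj_cov\<close> is symmetric anyway; symmetrising spares proving that \<open>Binv\<close> is.\<close>
definition perturb :: "real \<Rightarrow> real^'m^'m" where
  "perturb \<epsilon> = (\<chi> i j. if i \<notin> S \<and> j \<notin> S
     then (proj_cov i j + proj_cov j i) / 2 + (if i = j then \<epsilon> else 0) else \<Sigma>$i$j)"

lemma perturb_agree: "\<not> (i \<notin> S \<and> j \<notin> S) \<Longrightarrow> perturb \<epsilon> $ i $ j = \<Sigma>$i$j"
  unfolding perturb_def by auto

lemma quad_form_perturb:
  assumes w: "\<And>i. i \<in> S \<Longrightarrow> w$i = 0"
  shows "quad_form (perturb \<epsilon>) w = proj_quad w + \<epsilon> * (w \<bullet> w)"
proof -
  have "quad_form (perturb \<epsilon>) w = (\<Sum>i\<in>UNIV. \<Sum>j\<in>UNIV. (w$i * proj_cov i j * w$j) / 2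
      + (w$j * proj_cov j i * w$i) / 2 + (if i = j then \<epsilon> * (w$i * w$j) else 0))"
    unfolding quad_form_eq_sum perturb_def using w
    by (intro sum.cong refl) (auto simp: algebra_simps add_divide_distrib)
  also have "\<dots> = (\<Sum>i\<in>UNIV. \<Sum>j\<in>UNIV. w$i * proj_cov i j * w$j) / 2
      + (\<Sum>i\<in>UNIV. \<Sum>j\<in>UNIV. w$j * proj_cov j i * w$i) / 2
      + (\<Sum>i\<in>UNIV. \<Sum>j\<in>UNIV. if i = j then \<epsilon> * (w$i * w$j) else 0)"
    by (simp add: sum.distrib sum_divide_distrib)
  also have "(\<Sum>i\<in>UNIV. \<Sum>j\<in>UNIV. w$j * proj_cov j i * w$i)
      = (\<Sum>i\<in>UNIV. \<Sum>j\<in>UNIV. w$i * proj_cov i j * w$j)"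
    by (rule sum.swap)
  also have "(\<Sum>i\<in>UNIV. \<Sum>j\<in>UNIV. if i = j then \<epsilon> * (w$i * w$j) else 0) = \<epsilon> * (w \<bullet> w)"
    unfolding inner_vec_def by (simp add: sum_distrib_left)
  finally show ?thesis by (simp add: proj_quad_eq_sum)
qed

lemma pos_def_mat_perturb:
  assumes \<epsilon>: "0 < \<epsilon>"
  shows "pos_def_mat (perturb \<epsilon>)"
  unfolding pos_def_mat_def
proof (intro conjI allI impI)
  show "transpose (perturb \<epsilon>) = perturb \<epsilon>"
    unfolding transpose_def perturb_def by (simp add: vec_eq_iff Sigma_entry_commute add.commute)
next
  fix x :: "real^'m" assume x: "x \<noteq> 0"
  define w where "w = vec_restrict (-S) x"
  have "quad_form (perturb \<epsilon>) x - quad_form \<Sigma> x = quad_form (perturb \<epsilon>) w - quad_form \<Sigma> w"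
    unfolding w_def by (rule quad_form_diff_eq_restrict) (auto simp: perturb_agree)
  moreover have "quad_form (perturb \<epsilon>) w = proj_quad w + \<epsilon> * (w \<bullet> w)"
    by (rule quad_form_perturb) (simp add: w_def vec_restrict_nth)
  moreover have "quad_form \<Sigma> w - proj_quad w \<le> quad_form \<Sigma> x"
    using quad_form_add_ge[of "vec_restrict S x" w] vec_restrict_add_compl[of S x]
    by (simp add: vec_restrict_nth w_def)
  moreover have "0 < quad_form \<Sigma> x" using quad_form_pos[OF pos_def x] .
  moreover have "w = 0 \<or> 0 < \<epsilon> * (w \<bullet> w)" using \<epsilon> by (auto intro: mult_pos_pos)
  ultimately have "0 < quad_form (perturb \<epsilon>) x" by (auto simp: quad_form_def)
  then show "0 < x \<bullet> (perturb \<epsilon> *v x)" by (simp add: quad_form_def)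
qed

lemma quad_form_le_proj_quad:
  assumes w: "\<And>i. i \<in> S \<Longrightarrow> w$i = 0"
    and le: "\<And>\<epsilon>. 0 < \<epsilon> \<Longrightarrow> quad_form G w \<le> quad_form (perturb \<epsilon>) w"
  shows "quad_form G w \<le> proj_quad w"
proof (rule field_le_epsilon)
  fix e :: real assume e: "0 < e"
  define \<epsilon> where "\<epsilon> = e / (w \<bullet> w + 1)"
  have pos: "0 < w \<bullet> w + 1" by (simp add: add_nonneg_pos)
  have "quad_form G w \<le> proj_quad w + \<epsilon> * (w \<bullet> w)"
    using le[of \<epsilon>] quad_form_perturb[OF w] e pos by (simp add: \<epsilon>_def)
  also have "\<epsilon> * (w \<bullet> w) \<le> e"
    using e pos by (simp add: \<epsilon>_def field_simps)
  finally show "quad_form G w \<le> proj_quad w + e" by simp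
qed

lemma quad_form_eq_cond_quad:
  fixes G :: "real^'m^'m"
  assumes sym: "symmetric_mat G"
    and nonneg: "\<And>x. 0 \<le> quad_form G x" and le: "\<And>x. quad_form G x \<le> quad_form \<Sigma> x"
    and eq_on_S: "\<And>x. \<forall>i\<in>-S. x$i = 0 \<Longrightarrow> quad_form G x = quad_form \<Sigma> x"
    and upper: "quad_form G (vec_restrict (-S) u) \<le> proj_quad (vec_restrict (-S) u)"
  shows "quad_form G u = quad_form \<Sigma> u - cond_quad \<Sigma> S u"
proof -
  define D where "D = \<Sigma> - G"
  have qD: "quad_form D x = quad_form \<Sigma> x - quad_form G x" for x
    unfolding D_def by (rule quad_form_diff_mat)
  have symD: "symmetric_mat D"
    using symmetric_mat_entry[OF sym] Sigma_entry_commute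
    unfolding D_def symmetric_mat_def by (simp add: vec_eq_iff transpose_def)
  have shift: "quad_form G (v + w) = quad_form \<Sigma> (v + w) - quad_form \<Sigma> w + quad_form G w"
    if v: "\<forall>i\<in>-S. v$i = 0" for v w
  proof -
    have "D *v v = 0"
      by (rule psd_quad_form_eq_0_imp_kernel[OF symD]) (use qD le eq_on_S[OF v] in auto)
    then have "quad_form D (v + w) = quad_form D w" by (rule quad_form_add_kernel[OF symD])
    then show ?thesis using qD[of "v + w"] qD[of w] by linarith
  qed
  define w where "w = vec_restrict (-S) u"
  have "proj_quad w \<le> quad_form G w"
    using shift[of "opt_shift w" w] nonneg[of "opt_shift w + w"] quad_form_opt_shift_add[of w]
    by (simp add: opt_shift_outside)
  moreover have "quad_form G u = quad_form \<Sigma> u - quad_form \<Sigma> w + quad_form G w"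
    using shift[of "vec_restrict S u" w] vec_restrict_add_compl[of S u]
    by (simp add: vec_restrict_nth w_def)
  ultimately show ?thesis using upper cond_quad_eq[of u] by (simp add: w_def)
qed

end

theorem proposition1:
  fixes S :: "('m::finite) set" and \<sigma>e2 :: real
    and \<Gamma> :: "real^'m^'m \<Rightarrow> real^'m^'m"
  assumes m2: "CARD('m) \<ge> 2"
    and S_ne: "S \<noteq> {}" and S_proper: "S \<noteq> UNIV"
    and \<sigma>_pos: "\<sigma>e2 > 0"
    and \<Gamma>_sym: "\<And>\<Sigma>. pos_def_mat \<Sigma> \<Longrightarrow> symmetric_mat (\<Gamma> \<Sigma>)"
    and cond_i: "\<And>\<Sigma> u. pos_def_mat \<Sigma> \<Longrightarrow>
        0 \<le> herit_S \<Gamma> \<sigma>e2 \<Sigma> u \<and> herit_S \<Gamma> \<sigma>e2 \<Sigma> u \<le> herit \<sigma>e2 \<Sigma> u"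
    and cond_ii: "\<And>\<Sigma> u. pos_def_mat \<Sigma> \<Longrightarrow>
        (herit_S \<Gamma> \<sigma>e2 \<Sigma> u = herit \<sigma>e2 \<Sigma> u \<longleftrightarrow> (\<forall>i\<in>-S. u $ i = 0))"
    and cond_iii: "\<And>\<Sigma> \<Sigma>'. pos_def_mat \<Sigma> \<Longrightarrow> pos_def_mat \<Sigma>' \<Longrightarrow>
        (\<forall>i j. \<not> (i \<notin> S \<and> j \<notin> S) \<longrightarrow> \<Sigma> $ i $ j = \<Sigma>' $ i $ j) \<Longrightarrow> \<Gamma> \<Sigma> = \<Gamma> \<Sigma>'"
  shows "\<forall>\<Sigma> u. pos_def_mat \<Sigma> \<longrightarrow>
     herit_S \<Gamma> \<sigma>e2 \<Sigma> u = (quad_form \<Sigma> u - cond_quad \<Sigma> S u) / (quad_form \<Sigma> u + \<sigma>e2)"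
proof (intro allI impI)
  fix \<Sigma> :: "real^'m^'m" and u :: "real^'m"
  assume pd: "pos_def_mat \<Sigma>"
  interpret pos_def_partition \<Sigma> S by unfold_locales (rule pd)
  have denom_pos: "0 < quad_form A x + \<sigma>e2" if "pos_def_mat A" for A x
    using quad_form_nonneg[OF that, of x] \<sigma>_pos by linarith
  have bounds: "0 \<le> quad_form (\<Gamma> A) x \<and> quad_form (\<Gamma> A) x \<le> quad_form A x"
    if A: "pos_def_mat A" for A x
    using cond_i[OF A, of x] denom_pos[OF A, of x]
    unfolding herit_S_def herit_def by (simp add: zero_le_divide_iff divide_le_cancel)
  have eq_on_S: "quad_form (\<Gamma> \<Sigma>) x = quad_form \<Sigma> x" if "\<forall>i\<in>-S. x$i = 0" for x
    using cond_ii[OF pd, of x] denom_pos[OF pd, of x] that unfolding herit_S_def herit_def by simp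
  have upper: "quad_form (\<Gamma> \<Sigma>) (vec_restrict (-S) u) \<le> proj_quad (vec_restrict (-S) u)"
  proof (rule quad_form_le_proj_quad)
    fix \<epsilon> :: real assume \<epsilon>: "0 < \<epsilon>"
    have "\<Gamma> \<Sigma> = \<Gamma> (perturb \<epsilon>)"
      by (rule cond_iii[OF pd pos_def_mat_perturb[OF \<epsilon>]]) (auto simp: perturb_agree)
    then show "quad_form (\<Gamma> \<Sigma>) (vec_restrict (-S) u) \<le> quad_form (perturb \<epsilon>) (vec_restrict (-S) u)"
      using bounds[OF pos_def_mat_perturb[OF \<epsilon>]] by simp
  qed (simp add: vec_restrict_nth)
  have "quad_form (\<Gamma> \<Sigma>) u = quad_form \<Sigma> u - cond_quad \<Sigma> S u"
    using quad_form_eq_cond_quad[OF \<Gamma>_sym[OF pd] _ _ eq_on_S upper] bounds[OF pd] by blast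
  then show "herit_S \<Gamma> \<sigma>e2 \<Sigma> u = (quad_form \<Sigma> u - cond_quad \<Sigma> S u) / (quad_form \<Sigma> u + \<sigma>e2)"
    unfolding herit_S_def by simp
qed

end
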